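(* Let $n\ge1$, $\eta\in\mathbb{C}$, $\alpha\in\mathbb{C}\setminus\{0\}$, and let $$T(\lambda)=\begin{pmatrix}A(\lambda)&B(\lambda)\\ C(\lambda)&D(\lambda)\end{pmatrix}=\begin{pmatrix}\alpha\lambda^n+A_1\lambda^{n-1}+\dots+A_n & B_1\lambda^{n-1}+\dots+B_n\\ C_1\lambda^{n-1}+\dots+C_n & \alpha\lambda^n+D_1\lambda^{n-1}+\dots+D_n\end{pmatrix}$$ (i.e. leading coefficients $\alpha=\delta$, $\beta=\gamma=0$), with the $4n$ coefficients $A_i,B_i,C_i,D_i$ as coordinates, equipped with the bracket $\{\cdot,\cdot\}_1$ defined in the context. Then $$\{\operatorname{tr}T(\lambda),\operatorname{tr}T(\mu)\}_1=0$$ for all $\lambda,\mu$; equivalently, the coefficients $H_1,\dots,H_n$ of $\operatorname{tr}T(\lambda)=2\alpha\lambda^n+H_1\lambda^{n-1}+\dots+H_n$ pairwise Poisson commute with respect to $\{\cdot,\cdot\}_1$.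
   Context: Brackets are given by generating functions: the bracket of the coefficient of $\lambda^a$ in an entry $X(\lambda)$ with the coefficient of $\mu^b$ in an entry $Y(\mu)$ is the coefficient of $\lambda^a\mu^b$ in the (polynomial) right-hand side of the formula for $\{X(\lambda),Y(\mu)\}$; leading coefficients are constants; brackets extend by skew-symmetry and the Leibniz rule. For general constant leading coefficients $\alpha,\beta,\gamma,\delta$ ($\alpha\ne0$), the bracket $\{\cdot,\cdot\}_1$ is: $\{A(\lambda),A(\mu)\}_1=\{B(\lambda),B(\mu)\}_1=\{C(\lambda),C(\mu)\}_1=0$, $\{B(\lambda),A(\mu)\}_1=\frac{\eta}{\lambda-\mu}(\lambda B(\lambda)A(\mu)-\mu B(\mu)A(\lambda))-\frac{\eta\beta}{\alpha}A(\lambda)A(\mu)$, $\{C(\lambda),A(\mu)\}_1=\frac{-\eta}{\lambda-\mu}(\lambda C(\lambda)A(\mu)-\mu C(\mu)A(\lambda))+\frac{\eta\gamma}{\alpha}A(\lambda)A(\mu)$, $\{B(\lambda),C(\mu)\}_1=\frac{\eta}{\lambda-\mu}(\lambda D(\lambda)A(\mu)-\mu D(\mu)A(\lambda))-\frac{\eta\delta}{\alpha}A(\lambda)A(\mu)$, $\{B(\lambda),D(\mu)\}_1=\frac{-\eta\lambda}{\lambda-\mu}(B(\lambda)D(\mu)-B(\mu)D(\lambda))+\eta A(\lambda)\left(\frac{\beta}{\alpha}D(\mu)-\frac{\delta}{\alpha}B(\mu)\right)$, $\{C(\lambda),D(\mu)\}_1=\frac{\eta\lambda}{\lambda-\mu}(C(\lambda)D(\mu)-C(\mu)D(\lambda))-\eta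 A(\lambda)\left(\frac{\gamma}{\alpha}D(\mu)-\frac{\delta}{\alpha}C(\mu)\right)$, $\{A(\lambda),D(\mu)\}_1=\frac{\eta\lambda}{\lambda-\mu}(C(\lambda)B(\mu)-C(\mu)B(\lambda))-\eta A(\lambda)\left(\frac{\gamma}{\alpha}B(\mu)-\frac{\beta}{\alpha}C(\mu)\right)$, $\{D(\lambda),D(\mu)\}_1=\frac{\eta\gamma}{\alpha}(D(\lambda)B(\mu)-D(\mu)B(\lambda))-\frac{\eta\beta}{\alpha}(D(\lambda)C(\mu)-D(\mu)C(\lambda))+\frac{\eta\delta}{\alpha}(B(\lambda)C(\mu)-B(\mu)C(\lambda))$. In the claim these are used with $\delta=\alpha$, $\beta=\gamma=0$. *)

theory Defs
  imports "HOL-Computational_Algebra.Polynomial"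
begin

text \<open>A point of the phase space is a valuation p :: coord => complex.
  Polynomial functions in the coordinates are represented as functions of p
  (over the infinite field C this is faithful).\<close>

datatype coord = VA nat | VB nat | VC nat | VD nat

definition coords :: "nat \<Rightarrow> coord set" where
  "coords n = VA ` {1..n} \<union> VB ` {1..n} \<union> VC ` {1..n} \<union> VD ` {1..n}"

definition entry :: "nat \<Rightarrow> complex \<Rightarrow> (nat \<Rightarrow> coord) \<Rightarrow> (coord \<Rightarrow> complex) \<Rightarrow> complex poly" where
  "entry n lc V p = monom lc n + (\<Sum>i=1..n. monom (p (V i)) (n - i))"

text \<open>Bivariate polynomials in (lambda, mu): outer variable mu, inner variable lambda.
  The coefficient of lambda^a mu^b of F is coeff (coeff F b) a.\<close>
definition inL :: "complex poly \<Rightarrow> complex poly poly" where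
  "inL q = [:q:]"
definition inM :: "complex poly \<Rightarrow> complex poly poly" where
  "inM q = map_poly (\<lambda>c. [:c:]) q"
definition lam :: "complex poly poly" where "lam = [:[:0, 1:]:]"
definition mu :: "complex poly poly" where "mu = [:0, 1:]"
definition cst :: "complex \<Rightarrow> complex poly poly" where "cst c = [:[:c:]:]"
definition bicoeff :: "complex poly poly \<Rightarrow> nat \<Rightarrow> nat \<Rightarrow> complex" where
  "bicoeff F a b = coeff (coeff F b) a"

text \<open>The generating-function right-hand sides of the bracket {.,.}_1
  (general constant leading coefficients alpha beta gamma delta).\<close>
context
  fixes n :: nat and \<eta> \<alpha> \<beta> \<gamma> \<delta> :: complex and p :: "coord \<Rightarrow> complex"
begin

definition "Al = inL (entry n \<alpha> VA p)"
definition "Am = inM (entry n \<alpha> VA p)"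
definition "Bl = inL (entry n \<beta> VB p)"
definition "Bm = inM (entry n \<beta> VB p)"
definition "Cl = inL (entry n \<gamma> VC p)"
definition "Cm = inM (entry n \<gamma> VC p)"
definition "Dl = inL (entry n \<delta> VD p)"
definition "Dm = inM (entry n \<delta> VD p)"

definition "rhs_BA = cst \<eta> * ((lam * Bl * Am - mu * Bm * Al) div (lam - mu))
   - cst (\<eta> * \<beta> / \<alpha>) * Al * Am"
definition "rhs_CA = cst (- \<eta>) * ((lam * Cl * Am - mu * Cm * Al) div (lam - mu))
   + cst (\<eta> * \<gamma> / \<alpha>) * Al * Am"
definition "rhs_BC = cst \<eta> * ((lam * Dl * Am - mu * Dm * Al) div (lam - mu))
   - cst (\<eta> * \<delta> / \<alpha>) * Al * Am"
definition "rhs_BD = cst (- \<eta>) * ((lam * (Bl * Dm - Bm * Dl)) div (lam - mu))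
   + cst \<eta> * Al * (cst (\<beta> / \<alpha>) * Dm - cst (\<delta> / \<alpha>) * Bm)"
definition "rhs_CD = cst \<eta> * ((lam * (Cl * Dm - Cm * Dl)) div (lam - mu))
   - cst \<eta> * Al * (cst (\<gamma> / \<alpha>) * Dm - cst (\<delta> / \<alpha>) * Cm)"
definition "rhs_AD = cst \<eta> * ((lam * (Cl * Bm - Cm * Bl)) div (lam - mu))
   - cst \<eta> * Al * (cst (\<gamma> / \<alpha>) * Bm - cst (\<beta> / \<alpha>) * Cm)"
definition "rhs_DD = cst (\<eta> * \<gamma> / \<alpha>) * (Dl * Bm - Dm * Bl)
   - cst (\<eta> * \<beta> / \<alpha>) * (Dl * Cm - Dm * Cl)
   + cst (\<eta> * \<delta> / \<alpha>) * (Bl * Cm - Bm * Cl)"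

text \<open>Bracket of two coordinates, as a (polynomial) function of the point p.
  X_i is the coefficient of lambda^(n-i) in X(lambda); missing pairs by skew-symmetry;
  {A,A} = {B,B} = {C,C} = 0.\<close>
fun pb :: "coord \<Rightarrow> coord \<Rightarrow> complex" where
  "pb (VA i) (VA j) = 0"
| "pb (VB i) (VB j) = 0"
| "pb (VC i) (VC j) = 0"
| "pb (VB i) (VA j) = bicoeff rhs_BA (n - i) (n - j)"
| "pb (VA i) (VB j) = - bicoeff rhs_BA (n - j) (n - i)"
| "pb (VC i) (VA j) = bicoeff rhs_CA (n - i) (n - j)"
| "pb (VA i) (VC j) = - bicoeff rhs_CA (n - j) (n - i)"
| "pb (VB i) (VC j) = bicoeff rhs_BC (n - i) (n - j)"
| "pb (VC i) (VB j) = - bicoeff rhs_BC (n - j) (n - i)"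
| "pb (VB i) (VD j) = bicoeff rhs_BD (n - i) (n - j)"
| "pb (VD i) (VB j) = - bicoeff rhs_BD (n - j) (n - i)"
| "pb (VC i) (VD j) = bicoeff rhs_CD (n - i) (n - j)"
| "pb (VD i) (VC j) = - bicoeff rhs_CD (n - j) (n - i)"
| "pb (VA i) (VD j) = bicoeff rhs_AD (n - i) (n - j)"
| "pb (VD i) (VA j) = - bicoeff rhs_AD (n - j) (n - i)"
| "pb (VD i) (VD j) = bicoeff rhs_DD (n - i) (n - j)"

definition lin_bracket :: "(coord \<Rightarrow> complex) \<Rightarrow> (coord \<Rightarrow> complex) \<Rightarrow> complex" where
  "lin_bracket u w = (\<Sum>x\<in>coords n. \<Sum>y\<in>coords n. u x * w y * pb x y)"

end

text \<open>H_k = A_k + D_k, the coefficient of lambda^(n-k) in tr T(lambda), as a linear form.\<close>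
definition Hform :: "nat \<Rightarrow> coord \<Rightarrow> complex" where
  "Hform k = (\<lambda>x. if x = VA k \<or> x = VD k then 1 else 0)"

end

theory Submission
  imports Defs
begin

text \<open>For \<open>\<beta> = \<gamma> = 0\<close> and \<open>\<delta> = \<alpha>\<close> only the pairs (A,D), (D,A) and (D,D) contribute
  to \<open>{tr T(\<lambda>), tr T(\<mu>)}\<close>. With \<open>S(\<lambda>,\<mu>) = C(\<lambda>)B(\<mu>) - C(\<mu>)B(\<lambda>)\<close> and
  \<open>Q(\<lambda>,\<mu>) = \<lambda> S(\<lambda>,\<mu>) / (\<lambda> - \<mu>)\<close> these contributions are \<open>\<eta> Q(\<lambda>,\<mu>)\<close>, \<open>-\<eta> Q(\<mu>,\<lambda>)\<close>
  and \<open>-\<eta> S(\<lambda>,\<mu>)\<close>. As \<open>S\<close> is antisymmetric, \<open>Q(\<mu>,\<lambda>) = \<mu> S(\<lambda>,\<mu>) / (\<lambda> - \<mu>)\<close>,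
  so \<open>Q(\<lambda>,\<mu>) - Q(\<mu>,\<lambda>) = S(\<lambda>,\<mu>)\<close> and the three contributions cancel.\<close>

lemma map_poly_add:
  assumes "f 0 = 0" "\<And>x y. f (x + y) = f x + f y"
  shows "map_poly f (p + q) = map_poly f p + map_poly f q"
  by (intro poly_eqI) (simp add: assms coeff_map_poly)

lemma map_poly_mult:
  assumes "f 0 = 0" "\<And>x y. f (x + y) = f x + f y" "\<And>x y. f (x * y) = f x * f y"
  shows "map_poly f (p * q) = map_poly f p * map_poly f q"
proof (induction p)
  case (pCons a p)
  then show ?case
    by (simp add: map_poly_add[OF assms(1,2)] map_poly_smult[OF assms(1,3)] map_poly_pCons assms)
qed simp

lemma inM_add: "inM (p + q) = inM p + inM q"
  unfolding inM_def by (rule map_poly_add) auto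

lemma inM_mult: "inM (p * q) = inM p * inM q"
  unfolding inM_def by (rule map_poly_mult) auto

lemma inM_0 [simp]: "inM 0 = 0"
  by (simp add: inM_def)

lemma bicoeff_diff: "bicoeff (F - G) a b = bicoeff F a b - bicoeff G a b"
  by (simp add: bicoeff_def)

lemma bicoeff_minus: "bicoeff (- F) a b = - bicoeff F a b"
  by (simp add: bicoeff_def)

lemma bicoeff_cst_mult: "bicoeff (cst c * F) a b = c * bicoeff F a b"
  by (simp add: bicoeff_def cst_def)

lemma bicoeff_inL: "bicoeff (inL q) a b = (if b = 0 then coeff q a else 0)"
  by (simp add: bicoeff_def inL_def coeff_pCons split: nat.split)

lemma bicoeff_inM: "bicoeff (inM q) a b = (if a = 0 then coeff q b else 0)"
  by (simp add: bicoeff_def inM_def coeff_map_poly coeff_pCons split: nat.split)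

definition swap_vars :: "complex poly poly \<Rightarrow> complex poly poly" where
  "swap_vars F = poly (map_poly inM F) lam"

lemma bicoeff_swap_vars: "bicoeff (swap_vars F) a b = bicoeff F b a"
proof (induction F arbitrary: a)
  case (pCons c F)
  have "swap_vars (pCons c F) = inM c + lam * swap_vars F"
    by (simp add: swap_vars_def map_poly_pCons inM_add inM_mult)
  then show ?case
    using pCons.IH
    by (simp add: bicoeff_def inM_def lam_def coeff_map_poly coeff_pCons split: nat.split)
qed (simp add: swap_vars_def bicoeff_def)

lemma bicoeff_eqI: "(\<And>a b. bicoeff F a b = bicoeff G a b) \<Longrightarrow> F = G"
  unfolding bicoeff_def by (intro poly_eqI) blast

lemma swap_vars_swap_vars [simp]: "swap_vars (swap_vars F) = F"
  by (rule bicoeff_eqI) (simp add: bicoeff_swap_vars)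

lemma swap_vars_diff: "swap_vars (F - G) = swap_vars F - swap_vars G"
  by (rule bicoeff_eqI) (simp add: bicoeff_swap_vars bicoeff_diff)

lemma swap_vars_mult: "swap_vars (F * G) = swap_vars F * swap_vars G"
  unfolding swap_vars_def by (simp add: map_poly_mult inM_add inM_mult)

lemma swap_vars_inL: "swap_vars (inL q) = inM q"
  by (rule bicoeff_eqI) (simp add: bicoeff_swap_vars bicoeff_inL bicoeff_inM)

lemma swap_vars_inM: "swap_vars (inM q) = inL q"
  by (metis swap_vars_inL swap_vars_swap_vars)

lemma swap_vars_lam: "swap_vars lam = mu"
  using swap_vars_inL[of "[:0, 1:]"] by (simp add: inL_def lam_def inM_def mu_def map_poly_pCons)

lemma swap_vars_mu: "swap_vars mu = lam"
  by (metis swap_vars_lam swap_vars_swap_vars)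

lemma lam_minus_mu_dvd_inL_minus_inM: "lam - mu dvd inL q - inM q"
proof (induction q)
  case (pCons a q)
  have "inL (pCons a q) - inM (pCons a q) = lam * (inL q - inM q) + (lam - mu) * inM q"
    by (simp add: inL_def inM_def lam_def mu_def map_poly_pCons algebra_simps)
  then show ?case
    using pCons.IH by simp
qed (simp add: inL_def)

lemma lam_minus_mu_nonzero: "lam - mu \<noteq> 0"
proof
  assume "lam - mu = 0"
  then have "coeff (lam - mu) 1 = 0" by simp
  then show False by (simp add: lam_def mu_def)
qed

lemma divided_difference_minus_swap:
  assumes Q: "(lam - mu) * Q = lam * S" and S: "swap_vars S = - S"
  shows "Q - swap_vars Q = S"
proof -
  have "(mu - lam) * swap_vars Q = mu * - S"
    using arg_cong[OF Q, of swap_vars]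
    by (simp add: swap_vars_mult swap_vars_diff swap_vars_lam swap_vars_mu S)
  with Q have "(lam - mu) * (Q - swap_vars Q) = (lam - mu) * S"
    by (simp add: algebra_simps)
  then show ?thesis
    using lam_minus_mu_nonzero by simp
qed

lemma lam_div_minus_swap_vars:
  fixes b c :: "complex poly"
  defines "S \<equiv> inL c * inM b - inM c * inL b"
  shows "(lam * S) div (lam - mu) - swap_vars ((lam * S) div (lam - mu)) = S"
proof (rule divided_difference_minus_swap)
  have "S = (inL c - inM c) * inM b - inM c * (inL b - inM b)"
    unfolding S_def by (simp add: algebra_simps)
  then have "lam - mu dvd S"
    by (simp add: lam_minus_mu_dvd_inL_minus_inM)
  then show "(lam - mu) * ((lam * S) div (lam - mu)) = lam * S"
    by (simp add: dvd_mult)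
  show "swap_vars S = - S"
    unfolding S_def by (simp add: swap_vars_diff swap_vars_mult swap_vars_inL swap_vars_inM)
qed

lemma sum_coords_Hform:
  assumes "1 \<le> j" "j \<le> n"
  shows "(\<Sum>x\<in>coords n. Hform j x * f x) = f (VA j) + f (VD j)"
proof -
  have "VA j \<in> coords n" "VD j \<in> coords n" "finite (coords n)"
    using assms by (auto simp: coords_def)
  then have "(\<Sum>x\<in>coords n. Hform j x * f x) = (\<Sum>x\<in>{VA j, VD j}. Hform j x * f x)"
    by (intro sum.mono_neutral_right) (auto simp: Hform_def)
  then show ?thesis
    by (simp add: Hform_def)
qed

lemma lin_bracket_Hform:
  assumes "1 \<le> j" "j \<le> n" "1 \<le> k" "k \<le> n"
  shows "lin_bracket n \<eta> \<alpha> \<beta> \<gamma> \<delta> p (Hform j) (Hform k)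
    = pb n \<eta> \<alpha> \<beta> \<gamma> \<delta> p (VA j) (VA k) + pb n \<eta> \<alpha> \<beta> \<gamma> \<delta> p (VA j) (VD k)
      + pb n \<eta> \<alpha> \<beta> \<gamma> \<delta> p (VD j) (VA k) + pb n \<eta> \<alpha> \<beta> \<gamma> \<delta> p (VD j) (VD k)"
proof -
  have "lin_bracket n \<eta> \<alpha> \<beta> \<gamma> \<delta> p (Hform j) (Hform k)
      = (\<Sum>x\<in>coords n. Hform j x * (\<Sum>y\<in>coords n. Hform k y * pb n \<eta> \<alpha> \<beta> \<gamma> \<delta> p x y))"
    unfolding lin_bracket_def by (simp add: sum_distrib_left mult.assoc)
  then show ?thesis
    using assms by (simp add: sum_coords_Hform)
qed

theorem proposition3:
  fixes n :: nat and \<eta> \<alpha> :: complex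
  assumes "n \<ge> 1" and "\<alpha> \<noteq> 0"
  shows "\<forall>j k (p :: coord \<Rightarrow> complex). 1 \<le> j \<and> j \<le> n \<and> 1 \<le> k \<and> k \<le> n \<longrightarrow>
           lin_bracket n \<eta> \<alpha> 0 0 \<alpha> p (Hform j) (Hform k) = 0"
proof (intro allI impI)
  fix j k p assume jk: "1 \<le> j \<and> j \<le> n \<and> 1 \<le> k \<and> k \<le> n"
  let ?b = "entry n 0 VB p" and ?c = "entry n 0 VC p"
  let ?S = "inL ?c * inM ?b - inM ?c * inL ?b"
  let ?Q = "(lam * ?S) div (lam - mu)"
  have AD: "rhs_AD n \<eta> \<alpha> 0 0 p = cst \<eta> * ?Q"
    by (simp add: rhs_AD_def Bl_def Bm_def Cl_def Cm_def cst_def)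
  have DD: "rhs_DD n \<eta> \<alpha> 0 0 \<alpha> p = cst \<eta> * - ?S"
    using assms(2) by (simp add: rhs_DD_def Bl_def Bm_def Cl_def Cm_def cst_def algebra_simps)
  have antisym: "bicoeff ?Q a b - bicoeff ?Q b a = bicoeff ?S a b" for a b
    by (metis lam_div_minus_swap_vars bicoeff_diff bicoeff_swap_vars)
  have "lin_bracket n \<eta> \<alpha> 0 0 \<alpha> p (Hform j) (Hform k)
      = \<eta> * (bicoeff ?Q (n - j) (n - k) - bicoeff ?Q (n - k) (n - j) - bicoeff ?S (n - j) (n - k))"
    using jk by (simp add: lin_bracket_Hform AD DD bicoeff_cst_mult bicoeff_minus del: minus_diff_eq)
      (simp add: right_diff_distrib)
  then show "lin_bracket n \<eta> \<alpha> 0 0 \<alpha> p (Hform j) (Hform k) = 0"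
    by (simp add: antisym)
qed

end
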